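(* Under assumptions (A1)–(A6) below, for (almost) every $x$ in the support of $X$, $$\psi(x) = \Big[1-\frac{\mu_{10}(x)}{\mu_{11}(x)}\Big]\Big[1-\frac{\gamma_0(x)}{\gamma_1(x)}\Big],$$ $$\delta(x) = \Big[1-\frac{\mu_{00}(x)}{\mu_{11}(x)}\Big]\Big[1-\frac{\gamma_0(x)}{\gamma_1(x)}\Big] + \Big[1-\frac{\mu_{01}(x)}{\mu_{11}(x)}\Big]\frac{\gamma_0(x)}{\gamma_1(x)},$$ and $\zeta(x)=\delta(x)-\psi(x)$.
   Context: Observed data $O=(X,A,M,Y)$ with covariates $X\in\mathbb{R}^d$, binary exposure $A$, binary mediator $M$, binary outcome $Y$. For $a,m\in\{0,1\}$, $Y(a,m)$ denotes the potential outcome under $A=a,M=m$, $M(a)$ the potential mediator under $A=a$, and $Y(a):=Y(a,M(a))$; cross-world quantities $Y(a,M(a'))$ are defined by substitution. All are defined on a common probability space with $O$. Let $\mu_{am}(x)=P(Y=1\mid A=a,M=m,X=x)$ and $\gamma_a(x)=P(M=1\mid A=a,X=x)$. Estimands: $\delta(x)=P(Y(0)=0\mid Y(1)=1,M(1)=1,X=x)$ (total mediated probability of causation); $\psi(x)=P(Y(1,M(0))=0,\,Y(0,M(0))=0\mid Y(1,M(1))=1,M(1)=1,X=x)$ (probability of indirect causation); $\zeta(x)=P(Y(1,M(0))=1,\,Y(0,M(0))=0\mid Y(1,M(1))=1,M(1)=1,X=x)$ (probability of direct causation). Assumptions: (A1) consistency: for all $a,m$, $A=a,M=m\Rightarrow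 Y=Y(a,m)$ and $A=a\Rightarrow M=M(a)$. (A2) monotonicity: $Y(1,1)\ge Y(1,0)\ge Y(0,0)$, $Y(1,1)\ge Y(0,1)$, $M(1)\ge M(0)$. (A3) $A\perp\{Y(1,1),Y(1,0),Y(0,1),Y(0,0),M(1),M(0)\}\mid X$. (A4) cross-world ignorability: $\{Y(1,1),Y(1,0),Y(0,1),Y(0,0)\}\perp\{M(1),M(0)\}\mid X$. (A5) there is $\epsilon>0$ with $P\{\min_{a,m}P(A=a,M=m\mid X)\ge\epsilon\}=1$. (A6) $P\{P(Y=1\mid A=1,M=1,X)\ge\epsilon\}=1$. *)

theory Defs
  imports "HOL-Probability.Probability" "HOL-Probability.Conditional_Expectation"
begin

definition sigX :: "'a measure \<Rightarrow> ('a \<Rightarrow> 'x::topological_space) \<Rightarrow> 'a measure" where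
  "sigX M X = vimage_algebra (space M) X borel"

definition cprob :: "'a measure \<Rightarrow> ('a \<Rightarrow> 'x::topological_space) \<Rightarrow> 'a set \<Rightarrow> 'a \<Rightarrow> real" where
  "cprob M X E = real_cond_exp M (sigX M X) (indicator E :: 'a \<Rightarrow> real)"

definition ccprob :: "'a measure \<Rightarrow> ('a \<Rightarrow> 'x::topological_space) \<Rightarrow> 'a set \<Rightarrow> 'a set \<Rightarrow> 'a \<Rightarrow> real" where
  "ccprob M X E F = (\<lambda>\<omega>. cprob M X (E \<inter> F) \<omega> / cprob M X F \<omega>)"

definition cond_indep :: "'a measure \<Rightarrow> ('a \<Rightarrow> 'x::topological_space) \<Rightarrow> ('a \<Rightarrow> 'u) \<Rightarrow> ('a \<Rightarrow> 'v) \<Rightarrow> bool" where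
  "cond_indep M X U V \<longleftrightarrow>
     (\<forall>u v. AE \<omega> in M.
        cprob M X {\<omega>\<in>space M. U \<omega> = u \<and> V \<omega> = v} \<omega>
        = cprob M X {\<omega>\<in>space M. U \<omega> = u} \<omega> * cprob M X {\<omega>\<in>space M. V \<omega> = v} \<omega>)"

end

theory Submission
  imports Defs
begin

text \<open>Conditional on \<open>X\<close>, ignorability of the exposure (A3) turns each observed regression into
  a potential-outcome probability: \<open>\<mu>\<^sub>a\<^sub>m = P(Y(a,m) = 1)\<close> and \<open>\<gamma>\<^sub>a = P(M(a) = 1)\<close>.
  Monotonicity (A2) rewrites each cross-world event, given \<open>Y(1,M(1)) = 1\<close> and \<open>M(1) = 1\<close>, as a
  disjoint union of products of an outcome event and a mediator event, e.g.
  \<open>{Y(1,1) \<and> \<not> Y(1,0)} \<inter> {M(1) \<and> \<not> M(0)}\<close> for \<psi>; cross-world ignorability (A4) factorizes these,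
  and monotonicity again gives \<open>P(Y(1,1) \<and> \<not> Y(a,m)) = \<mu>\<^sub>1\<^sub>1 - \<mu>\<^sub>a\<^sub>m\<close> and
  \<open>P(M(1) \<and> \<not> M(0)) = \<gamma>\<^sub>1 - \<gamma>\<^sub>0\<close>. Dividing by \<open>P(Y(1,1)) P(M(1))\<close> gives the formulas;
  positivity (A5, A6) keeps all denominators away from zero.\<close>

lemma sigma_finite_subalgebra_sigX:
  assumes "prob_space M" "X \<in> borel_measurable M"
  shows "sigma_finite_subalgebra M (sigX M X)"
proof -
  interpret prob_space M by fact
  have "subalgebra M (sigX M X)"
    unfolding subalgebra_def sigX_def
    using sets_image_in_sets[of M "space M" X borel] assms(2) by auto
  then have "finite_measure_subalgebra M (sigX M X)"
    by (simp add: finite_measure_axioms finite_measure_subalgebra.intro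
        finite_measure_subalgebra_axioms.intro)
  then show ?thesis by (rule finite_measure_subalgebra_is_sigma_finite)
qed

lemma cprob_Collect_cong:
  assumes "\<And>x. x \<in> space M \<Longrightarrow> E x = F x"
  shows "cprob M X {x\<in>space M. E x} = cprob M X {x\<in>space M. F x}"
proof -
  have "{x\<in>space M. E x} = {x\<in>space M. F x}" using assms by auto
  then show ?thesis by simp
qed

lemma ccprob_Collect:
  "ccprob M X {x\<in>space M. E x} {x\<in>space M. F x}
     = (\<lambda>\<omega>. cprob M X {x\<in>space M. E x \<and> F x} \<omega> / cprob M X {x\<in>space M. F x} \<omega>)"
proof -
  have "{x\<in>space M. E x} \<inter> {x\<in>space M. F x} = {x\<in>space M. E x \<and> F x}" by auto
  then show ?thesis by (simp add: ccprob_def)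
qed

lemma cprob_Collect_split:
  assumes prob: "prob_space M" and mX: "X \<in> borel_measurable M"
    and [measurable]: "{x\<in>space M. E x} \<in> sets M" "{x\<in>space M. F x} \<in> sets M"
  shows "AE \<omega> in M. cprob M X {x\<in>space M. E x} \<omega>
           = cprob M X {x\<in>space M. E x \<and> F x} \<omega> + cprob M X {x\<in>space M. E x \<and> \<not> F x} \<omega>"
proof -
  interpret prob_space M by fact
  interpret sigma_finite_subalgebra M "sigX M X" using sigma_finite_subalgebra_sigX[OF prob mX] .
  have "integrable M (indicator {x\<in>space M. G x} :: 'a \<Rightarrow> real)"
    if [measurable]: "{x\<in>space M. G x} \<in> sets M" for G
    by (intro integrable_real_indicator) (measurable, simp add: less_top[symmetric])
  moreover have "(indicator {x\<in>space M. E x} :: 'a \<Rightarrow> real)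
      = (\<lambda>x. indicator {x\<in>space M. E x \<and> F x} x + indicator {x\<in>space M. E x \<and> \<not> F x} x)"
    by (auto simp: indicator_def)
  ultimately show ?thesis
    unfolding cprob_def using real_cond_exp_add by simp
qed

lemma cprob_Collect_diff:
  assumes prob: "prob_space M" and mX: "X \<in> borel_measurable M"
    and [measurable]: "{x\<in>space M. E x} \<in> sets M" "{x\<in>space M. F x} \<in> sets M"
    and sub: "\<And>x. x \<in> space M \<Longrightarrow> F x \<Longrightarrow> E x"
  shows "AE \<omega> in M. cprob M X {x\<in>space M. E x \<and> \<not> F x} \<omega>
           = cprob M X {x\<in>space M. E x} \<omega> - cprob M X {x\<in>space M. F x} \<omega>"
proof -
  have "cprob M X {x\<in>space M. E x \<and> F x} = cprob M X {x\<in>space M. F x}"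
    using sub by (intro cprob_Collect_cong) blast
  with cprob_Collect_split[OF prob mX, where E=E and F=F] show ?thesis
    by (auto elim!: eventually_mono)
qed

lemma cprob_vimage_sum:
  assumes prob: "prob_space M" and mX: "X \<in> borel_measurable M"
    and [measurable]: "W \<in> measurable M (count_space UNIV)" and "finite S"
  shows "AE \<omega> in M. cprob M X {x\<in>space M. W x \<in> S} \<omega>
           = (\<Sum>w\<in>S. cprob M X {x\<in>space M. W x = w} \<omega>)"
proof -
  interpret prob_space M by fact
  interpret sigma_finite_subalgebra M "sigX M X" using sigma_finite_subalgebra_sigX[OF prob mX] .
  have "{x\<in>space M. W x \<in> S} = (\<Union>w\<in>S. {x\<in>space M. W x = w})" by auto
  then have "(indicator {x\<in>space M. W x \<in> S} :: 'a \<Rightarrow> real)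
      = (\<lambda>x. \<Sum>w\<in>S. indicator {x\<in>space M. W x = w} x)"
    using \<open>finite S\<close> by (auto simp: fun_eq_iff disjoint_family_on_def intro!: indicator_UN_disjoint)
  moreover have "integrable M (indicator {x\<in>space M. W x = w} :: 'a \<Rightarrow> real)" for w
    by (auto intro!: integrable_real_indicator simp: less_top[symmetric])
  ultimately show ?thesis
    unfolding cprob_def by (simp add: real_cond_exp_sum)
qed

text \<open>Pointwise conditional independence extends to all events determined by the two variables,
  by summing over the finitely many values they take.\<close>

lemma cond_indep_cprob:
  fixes U :: "'a \<Rightarrow> 'u::finite" and V :: "'a \<Rightarrow> 'v::finite"
  assumes prob: "prob_space M" and mX: "X \<in> borel_measurable M"
    and [measurable]: "U \<in> measurable M (count_space UNIV)" "V \<in> measurable M (count_space UNIV)"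
    and indep: "cond_indep M X U V"
    and E: "\<And>x y. U x = U y \<Longrightarrow> E x = E y" and F: "\<And>x y. V x = V y \<Longrightarrow> F x = F y"
  shows "AE \<omega> in M. cprob M X {x\<in>space M. E x \<and> F x} \<omega>
           = cprob M X {x\<in>space M. E x} \<omega> * cprob M X {x\<in>space M. F x} \<omega>"
proof -
  define S where "S = U ` Collect E"
  define T where "T = V ` Collect F"
  have ES: "E x \<longleftrightarrow> U x \<in> S" and FT: "F x \<longleftrightarrow> V x \<in> T" for x
    using E F unfolding S_def T_def by blast+
  have "AE \<omega> in M. cprob M X {x\<in>space M. U x \<in> S \<and> V x \<in> T} \<omega>
          = (\<Sum>(u, v)\<in>S \<times> T. cprob M X {x\<in>space M. U x = u \<and> V x = v} \<omega>)"
    using cprob_vimage_sum[OF prob mX, of "\<lambda>x. (U x, V x)" "S \<times> T"]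
    by (simp add: case_prod_unfold prod_eq_iff)
  moreover have "AE \<omega> in M. cprob M X {x\<in>space M. U x \<in> S} \<omega>
          = (\<Sum>u\<in>S. cprob M X {x\<in>space M. U x = u} \<omega>)"
    by (rule cprob_vimage_sum[OF prob mX]) auto
  moreover have "AE \<omega> in M. cprob M X {x\<in>space M. V x \<in> T} \<omega>
          = (\<Sum>v\<in>T. cprob M X {x\<in>space M. V x = v} \<omega>)"
    by (rule cprob_vimage_sum[OF prob mX]) auto
  moreover have "AE \<omega> in M. \<forall>u v. cprob M X {x\<in>space M. U x = u \<and> V x = v} \<omega>
          = cprob M X {x\<in>space M. U x = u} \<omega> * cprob M X {x\<in>space M. V x = v} \<omega>"
    using indep unfolding cond_indep_def AE_all_countable by blast
  ultimately show ?thesis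
    unfolding ES FT
    by eventually_elim (simp add: sum_product sum.cartesian_product)
qed

locale mediation_model =
  fixes M :: "'a measure" and X :: "'a \<Rightarrow> 'x::topological_space"
    and A Mv Y :: "'a \<Rightarrow> bool"
    and Ypo :: "bool \<Rightarrow> bool \<Rightarrow> 'a \<Rightarrow> bool" and Mpo :: "bool \<Rightarrow> 'a \<Rightarrow> bool"
  assumes prob: "prob_space M" and mX: "X \<in> borel_measurable M"
    and mA [measurable]: "A \<in> measurable M (count_space UNIV)"
    and mMv [measurable]: "Mv \<in> measurable M (count_space UNIV)"
    and mY [measurable]: "Y \<in> measurable M (count_space UNIV)"
    and mYpo [measurable]: "\<And>a m. Ypo a m \<in> measurable M (count_space UNIV)"
    and mMpo [measurable]: "\<And>a. Mpo a \<in> measurable M (count_space UNIV)"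
    and consistency_Y: "\<And>\<omega>. \<omega> \<in> space M \<Longrightarrow> Y \<omega> = Ypo (A \<omega>) (Mv \<omega>) \<omega>"
    and consistency_M: "\<And>\<omega>. \<omega> \<in> space M \<Longrightarrow> Mv \<omega> = Mpo (A \<omega>) \<omega>"
    and monotone_Y10: "\<And>\<omega>. \<omega> \<in> space M \<Longrightarrow> Ypo True False \<omega> \<Longrightarrow> Ypo True True \<omega>"
    and monotone_Y00: "\<And>\<omega>. \<omega> \<in> space M \<Longrightarrow> Ypo False False \<omega> \<Longrightarrow> Ypo True False \<omega>"
    and monotone_Y01: "\<And>\<omega>. \<omega> \<in> space M \<Longrightarrow> Ypo False True \<omega> \<Longrightarrow> Ypo True True \<omega>"
    and monotone_M: "\<And>\<omega>. \<omega> \<in> space M \<Longrightarrow> Mpo False \<omega> \<Longrightarrow> Mpo True \<omega>"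
    and exposure_ignorable: "cond_indep M X A
          (\<lambda>\<omega>. ((Ypo True True \<omega>, Ypo True False \<omega>, Ypo False True \<omega>, Ypo False False \<omega>),
                (Mpo True \<omega>, Mpo False \<omega>)))"
    and cross_world_ignorable: "cond_indep M X
          (\<lambda>\<omega>. (Ypo True True \<omega>, Ypo True False \<omega>, Ypo False True \<omega>, Ypo False False \<omega>))
          (\<lambda>\<omega>. (Mpo True \<omega>, Mpo False \<omega>))"
begin

abbreviation pr :: "('a \<Rightarrow> bool) \<Rightarrow> 'a \<Rightarrow> real" where
  "pr E \<equiv> cprob M X {\<omega>\<in>space M. E \<omega>}"

definition outcomes :: "'a \<Rightarrow> bool \<times> bool \<times> bool \<times> bool" where
  "outcomes \<omega> = (Ypo True True \<omega>, Ypo True False \<omega>, Ypo False True \<omega>, Ypo False False \<omega>)"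

definition mediators :: "'a \<Rightarrow> bool \<times> bool" where
  "mediators \<omega> = (Mpo True \<omega>, Mpo False \<omega>)"

lemma outcomes_measurable [measurable]: "outcomes \<in> measurable M (count_space UNIV)"
  unfolding outcomes_def by measurable

lemma mediators_measurable [measurable]: "mediators \<in> measurable M (count_space UNIV)"
  unfolding mediators_def by measurable

lemma Ypo_determined: "outcomes x = outcomes y \<Longrightarrow> Ypo a m x = Ypo a m y"
  by (cases a; cases m) (simp_all add: outcomes_def)

lemma Mpo_determined: "mediators x = mediators y \<Longrightarrow> Mpo a x = Mpo a y"
  by (cases a) (simp_all add: mediators_def)

lemma exposure_factor:
  assumes "\<And>x y. outcomes x = outcomes y \<Longrightarrow> mediators x = mediators y \<Longrightarrow> E x = E y"
  shows "AE \<omega> in M. pr (\<lambda>x. A x = a \<and> E x) \<omega> = pr (\<lambda>x. A x = a) \<omega> * pr E \<omega>"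
proof (rule cond_indep_cprob[OF prob mX mA])
  show "cond_indep M X A (\<lambda>\<omega>. (outcomes \<omega>, mediators \<omega>))"
    using exposure_ignorable by (simp add: outcomes_def mediators_def)
  show "(\<lambda>\<omega>. (outcomes \<omega>, mediators \<omega>)) \<in> measurable M (count_space UNIV)"
    by measurable
  show "\<And>x y. A x = A y \<Longrightarrow> (A x = a) = (A y = a)" by simp
  show "\<And>x y. (outcomes x, mediators x) = (outcomes y, mediators y) \<Longrightarrow> E x = E y"
    using assms by blast
qed

lemma outcome_mediator_factor:
  assumes E: "\<And>x y. outcomes x = outcomes y \<Longrightarrow> E x = E y"
    and F: "\<And>x y. mediators x = mediators y \<Longrightarrow> F x = F y"
  shows "AE \<omega> in M. pr (\<lambda>x. E x \<and> F x) \<omega> = pr E \<omega> * pr F \<omega>"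
proof (rule cond_indep_cprob[OF prob mX outcomes_measurable mediators_measurable _ E F])
  show "cond_indep M X outcomes mediators"
    using cross_world_ignorable by (simp add: outcomes_def[abs_def] mediators_def[abs_def])
qed

lemma exposure_mediator_factor:
  "AE \<omega> in M. pr (\<lambda>x. A x = a \<and> Mv x = m) \<omega> = pr (\<lambda>x. A x = a) \<omega> * pr (\<lambda>x. Mpo a x = m) \<omega>"
proof -
  have "pr (\<lambda>x. A x = a \<and> Mv x = m) = pr (\<lambda>x. A x = a \<and> Mpo a x = m)"
    by (rule cprob_Collect_cong) (auto simp: consistency_M)
  moreover have "AE \<omega> in M. pr (\<lambda>x. A x = a \<and> Mpo a x = m) \<omega>
      = pr (\<lambda>x. A x = a) \<omega> * pr (\<lambda>x. Mpo a x = m) \<omega>"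
    by (rule exposure_factor) (metis Mpo_determined)
  ultimately show ?thesis by simp
qed

lemma exposure_outcome_mediator_factor:
  "AE \<omega> in M. pr (\<lambda>x. Y x \<and> A x = a \<and> Mv x = m) \<omega>
     = pr (\<lambda>x. A x = a) \<omega> * pr (Ypo a m) \<omega> * pr (\<lambda>x. Mpo a x = m) \<omega>"
proof -
  have consistent:
    "pr (\<lambda>x. Y x \<and> A x = a \<and> Mv x = m) = pr (\<lambda>x. A x = a \<and> Ypo a m x \<and> Mpo a x = m)"
    by (rule cprob_Collect_cong) (auto simp: consistency_M consistency_Y)
  have "AE \<omega> in M. pr (\<lambda>x. A x = a \<and> Ypo a m x \<and> Mpo a x = m) \<omega>
      = pr (\<lambda>x. A x = a) \<omega> * pr (\<lambda>x. Ypo a m x \<and> Mpo a x = m) \<omega>"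
    by (rule exposure_factor) (metis Mpo_determined Ypo_determined)
  moreover have "AE \<omega> in M. pr (\<lambda>x. Ypo a m x \<and> Mpo a x = m) \<omega>
      = pr (Ypo a m) \<omega> * pr (\<lambda>x. Mpo a x = m) \<omega>"
    by (rule outcome_mediator_factor) (metis Ypo_determined, metis Mpo_determined)
  ultimately show ?thesis
    unfolding consistent by eventually_elim (simp add: mult.assoc)
qed

lemma exposure_mediator_positive:
  "AE \<omega> in M. pr (\<lambda>x. A x = a \<and> Mv x = m) \<omega> \<noteq> 0
     \<longrightarrow> pr (\<lambda>x. A x = a) \<omega> \<noteq> 0 \<and> pr (\<lambda>x. Mpo a x = m) \<omega> \<noteq> 0"
  using exposure_mediator_factor[of a m] by eventually_elim simp

lemma mu_identified:
  "AE \<omega> in M. pr (\<lambda>x. A x = a \<and> Mv x = m) \<omega> \<noteq> 0 \<longrightarrow>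
     ccprob M X {\<omega>\<in>space M. Y \<omega>} {\<omega>\<in>space M. A \<omega> = a \<and> Mv \<omega> = m} \<omega> = pr (Ypo a m) \<omega>"
  using exposure_mediator_factor[of a m] exposure_outcome_mediator_factor[of a m]
  by eventually_elim (simp add: ccprob_Collect)

lemma gamma_identified:
  "AE \<omega> in M. pr (\<lambda>x. A x = a \<and> Mv x = m) \<omega> \<noteq> 0 \<longrightarrow>
     ccprob M X {\<omega>\<in>space M. Mv \<omega>} {\<omega>\<in>space M. A \<omega> = a} \<omega> = pr (Mpo a) \<omega>"
proof -
  have swap: "pr (\<lambda>x. Mv x \<and> A x = a) = pr (\<lambda>x. A x = a \<and> Mv x)"
    by (rule cprob_Collect_cong) auto
  show ?thesis
    unfolding ccprob_Collect swap
    using exposure_mediator_factor[of a True] exposure_mediator_positive[of a m]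
    by eventually_elim simp
qed

lemma conditioning_event_factor:
  "AE \<omega> in M. pr (\<lambda>x. Ypo True (Mpo True x) x \<and> Mpo True x) \<omega>
     = pr (Ypo True True) \<omega> * pr (Mpo True) \<omega>"
proof -
  have "pr (\<lambda>x. Ypo True (Mpo True x) x \<and> Mpo True x) = pr (\<lambda>x. Ypo True True x \<and> Mpo True x)"
    by (rule cprob_Collect_cong) (metis (full_types))
  moreover have "AE \<omega> in M. pr (\<lambda>x. Ypo True True x \<and> Mpo True x) \<omega>
      = pr (Ypo True True) \<omega> * pr (Mpo True) \<omega>"
    by (rule outcome_mediator_factor) (simp_all add: outcomes_def mediators_def)
  ultimately show ?thesis by simp
qed

lemma outcome_gap:
  "AE \<omega> in M. pr (\<lambda>x. Ypo True True x \<and> \<not> Ypo a m x) \<omega>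
     = pr (Ypo True True) \<omega> - pr (Ypo a m) \<omega>"
proof (rule cprob_Collect_diff[OF prob mX])
  show "Ypo True True x" if "x \<in> space M" "Ypo a m x" for x
    using that monotone_Y10 monotone_Y00 monotone_Y01 by (cases a; cases m) auto
qed measurable

lemma mediator_gap:
  "AE \<omega> in M. pr (\<lambda>x. Mpo True x \<and> \<not> Mpo False x) \<omega> = pr (Mpo True) \<omega> - pr (Mpo False) \<omega>"
  by (rule cprob_Collect_diff[OF prob mX]) (use monotone_M in auto)

lemma psi_numerator:
  "AE \<omega> in M. pr (\<lambda>x. (\<not> Ypo True (Mpo False x) x \<and> \<not> Ypo False (Mpo False x) x)
                        \<and> Ypo True (Mpo True x) x \<and> Mpo True x) \<omega>
     = (pr (Ypo True True) \<omega> - pr (Ypo True False) \<omega>) * (pr (Mpo True) \<omega> - pr (Mpo False) \<omega>)"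
proof -
  \<comment> \<open>given \<open>M(1) = 1\<close> and \<open>Y(1,1) = 1\<close>, \<open>Y(1,M(0)) = 0\<close> forces \<open>M(0) = 0\<close>\<close>
  have "pr (\<lambda>x. (\<not> Ypo True (Mpo False x) x \<and> \<not> Ypo False (Mpo False x) x)
                 \<and> Ypo True (Mpo True x) x \<and> Mpo True x)
      = pr (\<lambda>x. (Ypo True True x \<and> \<not> Ypo True False x) \<and> (Mpo True x \<and> \<not> Mpo False x))"
    by (rule cprob_Collect_cong) (metis (full_types) monotone_Y00)
  moreover have "AE \<omega> in M.
      pr (\<lambda>x. (Ypo True True x \<and> \<not> Ypo True False x) \<and> (Mpo True x \<and> \<not> Mpo False x)) \<omega>
      = pr (\<lambda>x. Ypo True True x \<and> \<not> Ypo True False x) \<omega> * pr (\<lambda>x. Mpo True x \<and> \<not> Mpo False x) \<omega>"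
    by (rule outcome_mediator_factor) (simp_all add: outcomes_def mediators_def)
  ultimately show ?thesis
    using outcome_gap[of True False] mediator_gap by (auto elim!: eventually_rev_mp)
qed

lemma delta_numerator:
  "AE \<omega> in M. pr (\<lambda>x. \<not> Ypo False (Mpo False x) x \<and> Ypo True (Mpo True x) x \<and> Mpo True x) \<omega>
     = (pr (Ypo True True) \<omega> - pr (Ypo False True) \<omega>) * pr (Mpo False) \<omega>
       + (pr (Ypo True True) \<omega> - pr (Ypo False False) \<omega>) * (pr (Mpo True) \<omega> - pr (Mpo False) \<omega>)"
proof -
  let ?D = "\<lambda>x. \<not> Ypo False (Mpo False x) x \<and> Ypo True (Mpo True x) x \<and> Mpo True x"
  have split: "AE \<omega> in M.
      pr ?D \<omega> = pr (\<lambda>x. ?D x \<and> Mpo False x) \<omega> + pr (\<lambda>x. ?D x \<and> \<not> Mpo False x) \<omega>"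
    by (rule cprob_Collect_split[OF prob mX]) measurable
  have "pr (\<lambda>x. ?D x \<and> Mpo False x)
      = pr (\<lambda>x. (Ypo True True x \<and> \<not> Ypo False True x) \<and> Mpo False x)"
    by (rule cprob_Collect_cong) (metis monotone_M)
  moreover have "AE \<omega> in M. pr (\<lambda>x. (Ypo True True x \<and> \<not> Ypo False True x) \<and> Mpo False x) \<omega>
      = pr (\<lambda>x. Ypo True True x \<and> \<not> Ypo False True x) \<omega> * pr (Mpo False) \<omega>"
    by (rule outcome_mediator_factor) (simp_all add: outcomes_def mediators_def)
  moreover have "pr (\<lambda>x. ?D x \<and> \<not> Mpo False x)
      = pr (\<lambda>x. (Ypo True True x \<and> \<not> Ypo False False x) \<and> (Mpo True x \<and> \<not> Mpo False x))"
    by (rule cprob_Collect_cong) (metis (full_types))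
  moreover have "AE \<omega> in M.
      pr (\<lambda>x. (Ypo True True x \<and> \<not> Ypo False False x) \<and> (Mpo True x \<and> \<not> Mpo False x)) \<omega>
      = pr (\<lambda>x. Ypo True True x \<and> \<not> Ypo False False x) \<omega> * pr (\<lambda>x. Mpo True x \<and> \<not> Mpo False x) \<omega>"
    by (rule outcome_mediator_factor) (simp_all add: outcomes_def mediators_def)
  ultimately show ?thesis
    using split outcome_gap[of False True] outcome_gap[of False False] mediator_gap
    by (auto elim!: eventually_rev_mp)
qed

lemma delta_split:
  "AE \<omega> in M. pr (\<lambda>x. \<not> Ypo False (Mpo False x) x \<and> Ypo True (Mpo True x) x \<and> Mpo True x) \<omega>
     = pr (\<lambda>x. (Ypo True (Mpo False x) x \<and> \<not> Ypo False (Mpo False x) x)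
                 \<and> Ypo True (Mpo True x) x \<and> Mpo True x) \<omega>
       + pr (\<lambda>x. (\<not> Ypo True (Mpo False x) x \<and> \<not> Ypo False (Mpo False x) x)
                 \<and> Ypo True (Mpo True x) x \<and> Mpo True x) \<omega>"
proof -
  let ?D = "\<lambda>x. \<not> Ypo False (Mpo False x) x \<and> Ypo True (Mpo True x) x \<and> Mpo True x"
  have "AE \<omega> in M. pr ?D \<omega> = pr (\<lambda>x. ?D x \<and> Ypo True (Mpo False x) x) \<omega>
                              + pr (\<lambda>x. ?D x \<and> \<not> Ypo True (Mpo False x) x) \<omega>"
    by (rule cprob_Collect_split[OF prob mX]) measurable
  moreover have
    "pr (\<lambda>x. ?D x \<and> Ypo True (Mpo False x) x)
       = pr (\<lambda>x. (Ypo True (Mpo False x) x \<and> \<not> Ypo False (Mpo False x) x)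
                 \<and> Ypo True (Mpo True x) x \<and> Mpo True x)"
    "pr (\<lambda>x. ?D x \<and> \<not> Ypo True (Mpo False x) x)
       = pr (\<lambda>x. (\<not> Ypo True (Mpo False x) x \<and> \<not> Ypo False (Mpo False x) x)
                 \<and> Ypo True (Mpo True x) x \<and> Mpo True x)"
    by (rule cprob_Collect_cong; blast)+
  ultimately show ?thesis by simp
qed

lemma psi_identified:
  "AE \<omega> in M. pr (Ypo True True) \<omega> \<noteq> 0 \<longrightarrow> pr (Mpo True) \<omega> \<noteq> 0 \<longrightarrow>
     ccprob M X {\<omega>\<in>space M. \<not> Ypo True (Mpo False \<omega>) \<omega> \<and> \<not> Ypo False (Mpo False \<omega>) \<omega>}
       {\<omega>\<in>space M. Ypo True (Mpo True \<omega>) \<omega> \<and> Mpo True \<omega>} \<omega>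
     = (1 - pr (Ypo True False) \<omega> / pr (Ypo True True) \<omega>) * (1 - pr (Mpo False) \<omega> / pr (Mpo True) \<omega>)"
  unfolding ccprob_Collect using psi_numerator conditioning_event_factor
proof eventually_elim
  case (elim \<omega>)
  then show ?case unfolding elim by (simp add: field_simps)
qed

lemma delta_identified:
  "AE \<omega> in M. pr (Ypo True True) \<omega> \<noteq> 0 \<longrightarrow> pr (Mpo True) \<omega> \<noteq> 0 \<longrightarrow>
     ccprob M X {\<omega>\<in>space M. \<not> Ypo False (Mpo False \<omega>) \<omega>}
       {\<omega>\<in>space M. Ypo True (Mpo True \<omega>) \<omega> \<and> Mpo True \<omega>} \<omega>
     = (1 - pr (Ypo False False) \<omega> / pr (Ypo True True) \<omega>) * (1 - pr (Mpo False) \<omega> / pr (Mpo True) \<omega>)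
       + (1 - pr (Ypo False True) \<omega> / pr (Ypo True True) \<omega>) * (pr (Mpo False) \<omega> / pr (Mpo True) \<omega>)"
  unfolding ccprob_Collect using delta_numerator conditioning_event_factor
proof eventually_elim
  case (elim \<omega>)
  then show ?case unfolding elim by (simp add: field_simps)
qed

lemma zeta_identified:
  "AE \<omega> in M.
     ccprob M X {\<omega>\<in>space M. Ypo True (Mpo False \<omega>) \<omega> \<and> \<not> Ypo False (Mpo False \<omega>) \<omega>}
       {\<omega>\<in>space M. Ypo True (Mpo True \<omega>) \<omega> \<and> Mpo True \<omega>} \<omega>
     = ccprob M X {\<omega>\<in>space M. \<not> Ypo False (Mpo False \<omega>) \<omega>}
         {\<omega>\<in>space M. Ypo True (Mpo True \<omega>) \<omega> \<and> Mpo True \<omega>} \<omega>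
       - ccprob M X {\<omega>\<in>space M. \<not> Ypo True (Mpo False \<omega>) \<omega> \<and> \<not> Ypo False (Mpo False \<omega>) \<omega>}
         {\<omega>\<in>space M. Ypo True (Mpo True \<omega>) \<omega> \<and> Mpo True \<omega>} \<omega>"
  unfolding ccprob_Collect using delta_split
  by eventually_elim (simp add: add_divide_distrib)

end

theorem theorem1:
  fixes M :: "'a measure"
    and X :: "'a \<Rightarrow> real ^ 'd"
    and A Mv Y :: "'a \<Rightarrow> bool"
    and Ypo :: "bool \<Rightarrow> bool \<Rightarrow> 'a \<Rightarrow> bool"
    and Mpo :: "bool \<Rightarrow> 'a \<Rightarrow> bool"
    and eps :: real
  assumes prob: "prob_space M"
    and mX: "X \<in> borel_measurable M"
    and mA: "A \<in> measurable M (count_space UNIV)"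
    and mM: "Mv \<in> measurable M (count_space UNIV)"
    and mY: "Y \<in> measurable M (count_space UNIV)"
    and mYpo: "\<And>a m. Ypo a m \<in> measurable M (count_space UNIV)"
    and mMpo: "\<And>a. Mpo a \<in> measurable M (count_space UNIV)"
    \<comment> \<open>(A1) consistency\<close>
    and A1Y: "\<And>\<omega> a m. \<omega> \<in> space M \<Longrightarrow> A \<omega> = a \<Longrightarrow> Mv \<omega> = m \<Longrightarrow> Y \<omega> = Ypo a m \<omega>"
    and A1M: "\<And>\<omega> a. \<omega> \<in> space M \<Longrightarrow> A \<omega> = a \<Longrightarrow> Mv \<omega> = Mpo a \<omega>"
    \<comment> \<open>(A2) monotonicity (True = 1, False = 0)\<close>
    and A2: "\<And>\<omega>. \<omega> \<in> space M \<Longrightarrow>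
               (Ypo True False \<omega> \<longrightarrow> Ypo True True \<omega>) \<and>
               (Ypo False False \<omega> \<longrightarrow> Ypo True False \<omega>) \<and>
               (Ypo False True \<omega> \<longrightarrow> Ypo True True \<omega>) \<and>
               (Mpo False \<omega> \<longrightarrow> Mpo True \<omega>)"
    \<comment> \<open>(A3) exposure ignorability given X\<close>
    and A3: "cond_indep M X A
               (\<lambda>\<omega>. ((Ypo True True \<omega>, Ypo True False \<omega>, Ypo False True \<omega>, Ypo False False \<omega>),
                     (Mpo True \<omega>, Mpo False \<omega>)))"
    \<comment> \<open>(A4) cross-world ignorability given X\<close>
    and A4: "cond_indep M X
               (\<lambda>\<omega>. (Ypo True True \<omega>, Ypo True False \<omega>, Ypo False True \<omega>, Ypo False False \<omega>))
               (\<lambda>\<omega>. (Mpo True \<omega>, Mpo False \<omega>))"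
    \<comment> \<open>(A5) positivity\<close>
    and eps_pos: "eps > 0"
    and A5: "AE \<omega> in M. \<forall>a m. cprob M X {\<omega>\<in>space M. A \<omega> = a \<and> Mv \<omega> = m} \<omega> \<ge> eps"
    \<comment> \<open>(A6)\<close>
    and A6: "AE \<omega> in M. ccprob M X {\<omega>\<in>space M. Y \<omega>} {\<omega>\<in>space M. A \<omega> \<and> Mv \<omega>} \<omega> \<ge> eps"
  shows
    "let mu = (\<lambda>a m. ccprob M X {\<omega>\<in>space M. Y \<omega>} {\<omega>\<in>space M. A \<omega> = a \<and> Mv \<omega> = m});
         gam = (\<lambda>a. ccprob M X {\<omega>\<in>space M. Mv \<omega>} {\<omega>\<in>space M. A \<omega> = a});
         cnd = {\<omega>\<in>space M. Ypo True (Mpo True \<omega>) \<omega> \<and> Mpo True \<omega>};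
         delta = ccprob M X {\<omega>\<in>space M. \<not> Ypo False (Mpo False \<omega>) \<omega>} cnd;
         psi = ccprob M X {\<omega>\<in>space M. \<not> Ypo True (Mpo False \<omega>) \<omega> \<and> \<not> Ypo False (Mpo False \<omega>) \<omega>} cnd;
         zeta = ccprob M X {\<omega>\<in>space M. Ypo True (Mpo False \<omega>) \<omega> \<and> \<not> Ypo False (Mpo False \<omega>) \<omega>} cnd
     in AE \<omega> in M.
          psi \<omega> = (1 - mu True False \<omega> / mu True True \<omega>) * (1 - gam False \<omega> / gam True \<omega>)
        \<and> delta \<omega> = (1 - mu False False \<omega> / mu True True \<omega>) * (1 - gam False \<omega> / gam True \<omega>)
                    + (1 - mu False True \<omega> / mu True True \<omega>) * (gam False \<omega> / gam True \<omega>)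
        \<and> zeta \<omega> = delta \<omega> - psi \<omega>"
proof -
  interpret mediation_model M X A Mv Y Ypo Mpo
    by (rule mediation_model.intro) (fact prob mX mA mM mY mYpo mMpo A3 A4 | metis A1Y A1M A2)+
  have "AE \<omega> in M. \<forall>a m. pr (\<lambda>x. A x = a \<and> Mv x = m) \<omega> \<noteq> 0"
    using A5 by eventually_elim (metis eps_pos less_le_trans less_irrefl)
  then show ?thesis
    unfolding Let_def
    using mu_identified[of True True] mu_identified[of True False] mu_identified[of False True]
      mu_identified[of False False] gamma_identified[of True True] gamma_identified[of False True]
      exposure_mediator_positive[of True True] A6 psi_identified delta_identified zeta_identified
  proof eventually_elim
    case (elim \<omega>)
    note positive = elim(1)[rule_format]
    show ?case
      using elim positive[of True True] positive[of True False] positive[of False True]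
        positive[of False False] eps_pos
      by simp
  qed
qed

end
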